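(* Let $f(x,y)=(x,y)$ be the identity function. Any protocol with a fixed order of speaking that computes $f$ over a feedback channel succeeds with probability at most $1/2$ when $1/4$ of the transmissions are corrupted; that is, there are inputs and an adversarial corruption pattern corrupting at most a $1/4$-fraction of the transmissions under which the protocol outputs the correct value with probability at most $1/2$.
   Context: Alice holds $x$ and Bob holds $y$; in each round exactly one party sends one symbol over the channel, and both parties must output $f(x,y)$. A feedback channel is a channel $\Sigma\to\Sigma$ (for some alphabet $\Sigma$) in which the adversary may change any transmitted symbol into any other symbol, and the sender learns, via a noiseless feedback, the (possibly corrupted) symbol received by the other party. A protocol has a fixed order of speaking if there is a function $g:\mathbb{N}\to\{\text{Alice},\text{Bob}\}$ such that the speaker at round $i$ is $g(i)$, independent of inputs and noise; the protocol runs a fixed number of rounds. *)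

theory Defs
  imports "HOL-Probability.Probability"
begin

(* - 'x, 'y   : input types of Alice and Bob
   - 's       : channel alphabet Sigma
   - 'ra, 'rb : private random strings of Alice and Bob (drawn independently)
   - spk i    : True iff Alice speaks at round i (fixed order of speaking, i = 0,1,...)
   - msgA x ra rcv : symbol Alice sends when it is her turn; rcv is the list of symbols
                     received so far over the whole run (thanks to the noiseless feedback,
                     both parties know the full received transcript); its length is the
                     current round number.
   - msgB y rb rcv : likewise for Bob.
   - adv hist s : adaptive adversary: sees the whole history of (sent, received) pairs and
                  the currently sent symbol s, and decides the received symbol.
*)

fun exec ::
  "(nat \<Rightarrow> bool) \<Rightarrow> ('x \<Rightarrow> 'ra \<Rightarrow> 's list \<Rightarrow> 's) \<Rightarrow> ('y \<Rightarrow> 'rb \<Rightarrow> 's list \<Rightarrow> 's)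
   \<Rightarrow> (('s \<times> 's) list \<Rightarrow> 's \<Rightarrow> 's) \<Rightarrow> 'x \<Rightarrow> 'y \<Rightarrow> 'ra \<Rightarrow> 'rb \<Rightarrow> nat \<Rightarrow> ('s \<times> 's) list"
where
  "exec spk msgA msgB adv x y ra rb 0 = []"
| "exec spk msgA msgB adv x y ra rb (Suc i) =
     (let h = exec spk msgA msgB adv x y ra rb i;
          s = (if spk i then msgA x ra (map snd h) else msgB y rb (map snd h))
      in h @ [(s, adv h s)])"

definition corruptions :: "('s \<times> 's) list \<Rightarrow> nat" where
  "corruptions h = length (filter (\<lambda>(s, r). s \<noteq> r) h)"

definition success ::
  "(nat \<Rightarrow> bool) \<Rightarrow> ('x \<Rightarrow> 'ra \<Rightarrow> 's list \<Rightarrow> 's) \<Rightarrow> ('y \<Rightarrow> 'rb \<Rightarrow> 's list \<Rightarrow> 's)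
   \<Rightarrow> ('x \<Rightarrow> 'ra \<Rightarrow> 's list \<Rightarrow> 'x \<times> 'y) \<Rightarrow> ('y \<Rightarrow> 'rb \<Rightarrow> 's list \<Rightarrow> 'x \<times> 'y)
   \<Rightarrow> nat \<Rightarrow> (('s \<times> 's) list \<Rightarrow> 's \<Rightarrow> 's) \<Rightarrow> 'x \<Rightarrow> 'y \<Rightarrow> 'ra \<Rightarrow> 'rb \<Rightarrow> bool"
where
  "success spk msgA msgB outA outB n adv x y ra rb =
     (let rcv = map snd (exec spk msgA msgB adv x y ra rb n)
      in outA x ra rcv = (x, y) \<and> outB y rb rcv = (x, y))"

end

theory Submission
  imports Defs
begin

(* Say Alice speaks in at most half of the n \<le> 4c rounds; split her rounds at some m into
   two blocks of at most c rounds each. Consider the hybrid run in which Alice behaves as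
   (x0, u) before m and as (x1, v) from m on, with u and v independent copies of her
   randomness. The adversary can show Bob this hybrid either in a run on x0 with randomness u,
   rewriting Alice's late block, or in a run on x1 with randomness v, rewriting the early
   block; either way at most c symbols are corrupted. Bob's output on the hybrid cannot be
   both (x0, y) and (x1, y), so averaging over u, v shows that for a suitable fixed value of
   the other copy one of the two attacks succeeds with probability at most 1/2.
   If Bob is the one who speaks rarely, exchange the roles. *)

lemma measure_pmf_prob_bind_pmf:
  "measure_pmf.prob (bind_pmf M N) X = (\<integral>x. measure_pmf.prob (N x) X \<partial>M)"
proof -
  have "integrable (measure_pmf M) (\<lambda>x. measure_pmf.prob (N x) X)"
    by (rule measure_pmf.integrable_const_bound[where B=1]) auto
  then have "(\<integral>\<^sup>+x. ennreal (measure_pmf.prob (N x) X) \<partial>M)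
      = ennreal (\<integral>x. measure_pmf.prob (N x) X \<partial>M)"
    by (rule nn_integral_eq_integral) auto
  then show ?thesis
    using emeasure_bind_pmf[of M N X] by (simp add: measure_pmf.emeasure_eq_measure)
qed

lemma disjoint_events_section_le_half:
  fixes P :: "'a pmf" and Q :: "'b pmf"
  assumes disj: "\<And>u v w. \<not> (E0 u v w \<and> E1 u v w)"
  shows "(\<exists>v. measure_pmf.prob (pair_pmf P Q) {(u, w). E0 u v w} \<le> 1 / 2) \<or>
         (\<exists>u. measure_pmf.prob (pair_pmf P Q) {(v, w). E1 u v w} \<le> 1 / 2)"
proof (rule ccontr)
  define f0 where "f0 v = measure_pmf.prob (pair_pmf P Q) {(u, w). E0 u v w}" for v
  define f1 where "f1 u = measure_pmf.prob (pair_pmf P Q) {(v, w). E1 u v w}" for u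
  assume "\<not> ?thesis"
  then have gt0: "1 / 2 < f0 v" and gt1: "1 / 2 < f1 u" for u v
    unfolding f0_def f1_def by (auto simp: not_le)
  define R where "R = bind_pmf P (\<lambda>u. bind_pmf P (\<lambda>v. map_pmf (\<lambda>w. (u, v, w)) Q))"
  have R_by_v: "R = bind_pmf P (\<lambda>v. map_pmf (\<lambda>(u, w). (u, v, w)) (pair_pmf P Q))"
    unfolding R_def
    by (subst bind_commute_pmf) (simp add: pair_pmf_def map_pmf_def bind_assoc_pmf bind_return_pmf)
  have R_by_u: "R = bind_pmf P (\<lambda>u. map_pmf (\<lambda>(v, w). (u, v, w)) (pair_pmf P Q))"
    unfolding R_def by (simp add: pair_pmf_def map_pmf_def bind_assoc_pmf bind_return_pmf)
  have int: "integrable (measure_pmf P) f"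
    if "\<And>x. f x \<le> 1" "\<And>x. 0 \<le> f x" for f :: "'a \<Rightarrow> real"
    by (rule measure_pmf.integrable_const_bound[where B=1]) (use that in auto)
  have "measure_pmf.prob R {(u, v, w). E0 u v w} = measure_pmf.expectation P f0"
    unfolding R_by_v measure_pmf_prob_bind_pmf measure_map_pmf f0_def
    by (intro Bochner_Integration.integral_cong arg_cong[where f="measure_pmf.prob _"]) auto
  also have "1 / 2 < \<dots>"
    using gt0 by (intro measure_pmf.expectation_greater int) (auto simp: f0_def)
  finally have p0: "1 / 2 < measure_pmf.prob R {(u, v, w). E0 u v w}" .
  have "measure_pmf.prob R {(u, v, w). E1 u v w} = measure_pmf.expectation P f1"
    unfolding R_by_u measure_pmf_prob_bind_pmf measure_map_pmf f1_def
    by (intro Bochner_Integration.integral_cong arg_cong[where f="measure_pmf.prob _"]) auto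
  also have "1 / 2 < \<dots>"
    using gt1 by (intro measure_pmf.expectation_greater int) (auto simp: f1_def)
  finally have p1: "1 / 2 < measure_pmf.prob R {(u, v, w). E1 u v w}" .
  have "measure_pmf.prob R {(u, v, w). E0 u v w} + measure_pmf.prob R {(u, v, w). E1 u v w}
      = measure_pmf.prob R ({(u, v, w). E0 u v w} \<union> {(u, v, w). E1 u v w})"
    using disj by (intro measure_pmf.finite_measure_Union[symmetric]) auto
  also have "\<dots> \<le> 1" by simp
  finally show False using p0 p1 by linarith
qed

lemma length_exec [simp]: "length (exec spk msgA msgB adv x y ra rb i) = i"
  by (induction i) (simp_all add: Let_def)

lemma exec_swap_parties:
  "exec (\<lambda>i. \<not> spk i) msgB msgA adv y x rb ra i = exec spk msgA msgB adv x y ra rb i"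
  by (induction i) (simp_all add: Let_def)

lemma success_swap_parties:
  "success (\<lambda>i. \<not> spk i) msgB msgA (\<lambda>y rb r. prod.swap (outB y rb r))
     (\<lambda>x ra r. prod.swap (outA x ra r)) n adv y x rb ra
   = success spk msgA msgB outA outB n adv x y ra rb"
  unfolding success_def Let_def exec_swap_parties
  by (auto simp: prod_eq_iff)

lemma corruptions_exec_le:
  assumes "\<And>h s. adv h s \<noteq> s \<Longrightarrow> P (length h)"
  shows "corruptions (exec spk msgA msgB adv x y ra rb n) \<le> card {i. i < n \<and> P i}"
proof (induction n)
  case 0
  then show ?case by (simp add: corruptions_def)
next
  case (Suc n)
  define h where "h = exec spk msgA msgB adv x y ra rb n"
  define s where "s = (if spk n then msgA x ra (map snd h) else msgB y rb (map snd h))"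
  have "corruptions (exec spk msgA msgB adv x y ra rb (Suc n))
      = corruptions h + (if adv h s \<noteq> s then 1 else 0)"
    by (auto simp: h_def s_def Let_def corruptions_def)
  also have "\<dots> \<le> card {i. i < n \<and> P i} + (if P n then 1 else 0)"
    using Suc assms[of h s] by (auto simp: h_def)
  also have "\<dots> = card {i. i < Suc n \<and> P i}"
  proof -
    have "{i. i < Suc n \<and> P i}
        = (if P n then insert n {i. i < n \<and> P i} else {i. i < n \<and> P i})"
      by (auto simp: less_Suc_eq)
    then show ?thesis by simp
  qed
  finally show ?case .
qed

lemma card_split_at_le_half:
  fixes A :: "nat set"
  assumes "finite A" and "card A \<le> 2 * c"
  shows "\<exists>m. card {i \<in> A. i < m} \<le> c \<and> card {i \<in> A. m \<le> i} \<le> c"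
proof -
  have card_A: "card A = card {i \<in> A. i < m} + card {i \<in> A. m \<le> i}" for m
    using assms(1) by (subst card_Un_disjoint[symmetric]) (auto intro: arg_cong[where f=card])
  define m where "m = (LEAST m. card {i \<in> A. m \<le> i} \<le> c)"
  have "{i \<in> A. Suc (Max A) \<le> i} = {}"
    using Max_ge[OF assms(1)] by fastforce
  then have "card {i \<in> A. Suc (Max A) \<le> i} \<le> c"
    by (metis card.empty le0)
  then have upper: "card {i \<in> A. m \<le> i} \<le> c"
    unfolding m_def by (rule LeastI)
  have "card {i \<in> A. i < m} \<le> c"
  proof (cases m)
    case (Suc k)
    have "\<not> card {i \<in> A. k \<le> i} \<le> c"
      using Suc m_def not_less_Least[of k] by (metis lessI)
    moreover have "card {i \<in> A. k \<le> i} \<le> card (insert k {i \<in> A. m \<le> i})"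
      using Suc assms(1) by (intro card_mono) auto
    moreover have "card (insert k {i \<in> A. m \<le> i}) \<le> Suc (card {i \<in> A. m \<le> i})"
      using assms(1) by (simp add: card_insert_if)
    ultimately show ?thesis
      using card_A[of m] assms(2) by linarith
  qed simp
  with upper show ?thesis by blast
qed

fun transcript ::
  "(nat \<Rightarrow> bool) \<Rightarrow> (nat \<Rightarrow> 's list \<Rightarrow> 's) \<Rightarrow> ('s list \<Rightarrow> 's) \<Rightarrow> nat \<Rightarrow> 's list"
where
  "transcript spk a b 0 = []"
| "transcript spk a b (Suc i) =
     (let r = transcript spk a b i in r @ [if spk i then a i r else b r])"

definition impersonate_alice ::
  "(nat \<Rightarrow> bool) \<Rightarrow> nat set \<Rightarrow> ('s list \<Rightarrow> 's) \<Rightarrow> ('s \<times> 's) list \<Rightarrow> 's \<Rightarrow> 's"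
where
  "impersonate_alice spk S a h s = (if spk (length h) \<and> length h \<in> S then a (map snd h) else s)"

lemma received_exec_impersonate_alice:
  "map snd (exec spk msgA msgB (impersonate_alice spk S a) x y ra rb i)
   = transcript spk (\<lambda>j. if j \<in> S then a else msgA x ra) (msgB y rb) i"
  by (induction i) (simp_all add: Let_def impersonate_alice_def)

lemma corruptions_impersonate_alice:
  "corruptions (exec spk msgA msgB (impersonate_alice spk S a) x y ra rb n)
   \<le> card {i. i < n \<and> spk i \<and> i \<in> S}"
  by (rule corruptions_exec_le) (auto simp: impersonate_alice_def split: if_splits)

lemma attack_if_alice_speaks_rarely:
  fixes msgA :: "'x \<Rightarrow> 'ra \<Rightarrow> 's list \<Rightarrow> 's"
    and outB :: "'y \<Rightarrow> 'rb \<Rightarrow> 's list \<Rightarrow> 'x \<times> 'y"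
    and x0 x1 :: 'x
  assumes "x0 \<noteq> x1" and "card {i. i < n \<and> spk i} \<le> 2 * c"
  shows "\<exists>x y adv.
           (\<forall>ra rb. corruptions (exec spk msgA msgB adv x y ra rb n) \<le> c) \<and>
           measure_pmf.prob (pair_pmf PA PB)
             {(ra, rb). success spk msgA msgB outA outB n adv x y ra rb} \<le> 1 / 2"
proof -
  obtain m where early: "card {i. i < n \<and> spk i \<and> i \<in> {..<m}} \<le> c"
    and late: "card {i. i < n \<and> spk i \<and> i \<in> {m..}} \<le> c"
    using card_split_at_le_half[of "{i. i < n \<and> spk i}" c] assms(2) by (auto simp: conj_assoc)
  fix y :: 'y
  define hybrid where
    "hybrid u v rb = transcript spk (\<lambda>j. if j < m then msgA x0 u else msgA x1 v) (msgB y rb) n"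
    for u v rb
  have received_late:
    "map snd (exec spk msgA msgB (impersonate_alice spk {m..} (msgA x1 v)) x0 y u rb n)
     = hybrid u v rb" for u v rb
    unfolding received_exec_impersonate_alice hybrid_def
    by (intro arg_cong[where f="\<lambda>a. transcript spk a _ n"]) (auto simp: fun_eq_iff)
  have received_early:
    "map snd (exec spk msgA msgB (impersonate_alice spk {..<m} (msgA x0 u)) x1 y v rb n)
     = hybrid u v rb" for u v rb
    unfolding received_exec_impersonate_alice hybrid_def by simp
  consider v where
      "measure_pmf.prob (pair_pmf PA PB) {(u, rb). outB y rb (hybrid u v rb) = (x0, y)} \<le> 1 / 2"
    | u where
      "measure_pmf.prob (pair_pmf PA PB) {(v, rb). outB y rb (hybrid u v rb) = (x1, y)} \<le> 1 / 2"
    using disjoint_events_section_le_half[of "\<lambda>u v rb. outB y rb (hybrid u v rb) = (x0, y)"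
        "\<lambda>u v rb. outB y rb (hybrid u v rb) = (x1, y)" PA PB] assms(1) by auto
  then show ?thesis
  proof cases
    case (1 v)
    let ?adv = "impersonate_alice spk {m..} (msgA x1 v)"
    have "measure_pmf.prob (pair_pmf PA PB)
          {(ra, rb). success spk msgA msgB outA outB n ?adv x0 y ra rb}
        \<le> measure_pmf.prob (pair_pmf PA PB) {(u, rb). outB y rb (hybrid u v rb) = (x0, y)}"
      by (intro measure_pmf.finite_measure_mono) (auto simp: success_def Let_def received_late)
    with 1 show ?thesis
      using order_trans[OF corruptions_impersonate_alice late]
      by (intro exI[of _ x0] exI[of _ y] exI[of _ ?adv]) auto
  next
    case (2 u)
    let ?adv = "impersonate_alice spk {..<m} (msgA x0 u)"
    have "measure_pmf.prob (pair_pmf PA PB)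
          {(ra, rb). success spk msgA msgB outA outB n ?adv x1 y ra rb}
        \<le> measure_pmf.prob (pair_pmf PA PB) {(v, rb). outB y rb (hybrid u v rb) = (x1, y)}"
      by (intro measure_pmf.finite_measure_mono) (auto simp: success_def Let_def received_early)
    with 2 show ?thesis
      using order_trans[OF corruptions_impersonate_alice early]
      by (intro exI[of _ x1] exI[of _ y] exI[of _ ?adv]) auto
  qed
qed

lemma attack_if_bob_speaks_rarely:
  fixes msgB :: "'y \<Rightarrow> 'rb \<Rightarrow> 's list \<Rightarrow> 's"
    and outA :: "'x \<Rightarrow> 'ra \<Rightarrow> 's list \<Rightarrow> 'x \<times> 'y"
    and y0 y1 :: 'y
  assumes "y0 \<noteq> y1" and "card {i. i < n \<and> \<not> spk i} \<le> 2 * c"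
  shows "\<exists>x y adv.
           (\<forall>ra rb. corruptions (exec spk msgA msgB adv x y ra rb n) \<le> c) \<and>
           measure_pmf.prob (pair_pmf PA PB)
             {(ra, rb). success spk msgA msgB outA outB n adv x y ra rb} \<le> 1 / 2"
proof -
  obtain y x adv where
    corr: "\<forall>rb ra. corruptions (exec (\<lambda>i. \<not> spk i) msgB msgA adv y x rb ra n) \<le> c" and
    prob: "measure_pmf.prob (pair_pmf PB PA)
      {(rb, ra). success (\<lambda>i. \<not> spk i) msgB msgA (\<lambda>y rb r. prod.swap (outB y rb r))
                   (\<lambda>x ra r. prod.swap (outA x ra r)) n adv y x rb ra} \<le> 1 / 2"
    using attack_if_alice_speaks_rarely[OF assms, where msgA=msgB and msgB=msgA
        and outA="\<lambda>y rb r. prod.swap (outB y rb r)" and outB="\<lambda>x ra r. prod.swap (outA x ra r)"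
        and PA=PB and PB=PA]
    by blast
  have "measure_pmf.prob (pair_pmf PA PB)
        {(ra, rb). success spk msgA msgB outA outB n adv x y ra rb}
      = measure_pmf.prob (pair_pmf PB PA)
        {(rb, ra). success spk msgA msgB outA outB n adv x y ra rb}"
    by (subst pair_commute_pmf)
      (auto simp: measure_map_pmf intro: arg_cong[where f="measure_pmf.prob _"])
  with prob corr show ?thesis
    unfolding success_swap_parties exec_swap_parties
    by (intro exI[of _ x] exI[of _ y] exI[of _ adv] conjI allI) simp_all
qed

theorem mainTheorem2:
  fixes spk :: "nat \<Rightarrow> bool"
    and msgA :: "'x \<Rightarrow> 'ra \<Rightarrow> 's list \<Rightarrow> 's"
    and msgB :: "'y \<Rightarrow> 'rb \<Rightarrow> 's list \<Rightarrow> 's"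
    and outA :: "'x \<Rightarrow> 'ra \<Rightarrow> 's list \<Rightarrow> 'x \<times> 'y"
    and outB :: "'y \<Rightarrow> 'rb \<Rightarrow> 's list \<Rightarrow> 'x \<times> 'y"
    and PA :: "'ra pmf" and PB :: "'rb pmf"
    and n :: nat
  assumes "\<exists>x1 x2 :: 'x. x1 \<noteq> x2"
    and "\<exists>y1 y2 :: 'y. y1 \<noteq> y2"
  shows "\<exists>x y adv.
           (\<forall>ra rb. corruptions (exec spk msgA msgB adv x y ra rb n) \<le> nat \<lceil>real n / 4\<rceil>) \<and>
           measure_pmf.prob (pair_pmf PA PB)
             {(ra, rb). success spk msgA msgB outA outB n adv x y ra rb} \<le> 1 / 2"
proof -
  define c where "c = nat \<lceil>real n / 4\<rceil>"
  have "real n / 4 \<le> real c"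
    unfolding c_def using le_of_int_ceiling[of "real n / 4"] by (simp add: of_nat_nat)
  then have "n \<le> 4 * c"
    by simp
  moreover have "{i. i < n \<and> spk i} \<union> {i. i < n \<and> \<not> spk i} = {..<n}"
    by auto
  then have "card {i. i < n \<and> spk i} + card {i. i < n \<and> \<not> spk i} = n"
    by (subst card_Un_disjoint[symmetric]) auto
  ultimately consider "card {i. i < n \<and> spk i} \<le> 2 * c" | "card {i. i < n \<and> \<not> spk i} \<le> 2 * c"
    by linarith
  then show ?thesis
  proof cases
    case 1
    obtain x0 x1 :: 'x where "x0 \<noteq> x1"
      using assms(1) by blast
    from attack_if_alice_speaks_rarely[OF this 1] show ?thesis
      unfolding c_def .
  next
    case 2
    obtain y0 y1 :: 'y where "y0 \<noteq> y1"
      using assms(2) by blast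
    from attack_if_bob_speaks_rarely[OF this 2] show ?thesis
      unfolding c_def .
  qed
qed

end
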